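(* Let $\theta$ be the Euler operator $\theta f(x)=xf'(x)$ on $\mathscr{A}(\mathbb{R})$ and let $P(\theta)=\sum_{k=0}^K a_k\theta^k$ with $a_0,\dots,a_K\in\mathbb{C}$ be a differential operator of degree $K\geq 2$ (i.e. $a_K\neq 0$). Then $P(\theta)$ does not generate a $C_0$-semigroup on $\mathscr{A}(\mathbb{R})$ in each of the following cases: (1) $\operatorname{Re}a_K=\dots=\operatorname{Re}a_{l+1}=0$ and $\operatorname{Re}a_l>0$ for some $l\geq 2$; (2) $a_K,\dots,a_2\in i\mathbb{Q}$.
   Context: $\mathscr{A}(\mathbb{R})$ denotes the space of real analytic functions on $\mathbb{R}$ with the inductive limit topology $\operatorname{ind}_{U\supset\mathbb{R}}H(U)$ ($U$ complex open neighbourhoods of $\mathbb{R}$, $H(U)$ with compact-open topology). A $C_0$-semigroup is a family $(T_t)_{t\ge0}$ of continuous linear operators on $\mathscr{A}(\mathbb{R})$ with $T_tT_s=T_{t+s}$, $T_0=I$, and $t\mapsto T_tf$ continuous for each $f$; its generator is $Af=\lim_{t\to0^+}(T_tf-f)/t$ on the domain where the limit exists; "$P(\theta)$ generates" means $P(\theta)$ (with domain $\mathscr{A}(\mathbb{R})$) is the generator. $\theta^0$ is the identity. *)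

theory Defs
  imports "HOL-Analysis.Analysis"
begin

definition real_analytic :: "(real \<Rightarrow> complex) set" where
  "real_analytic = {f. \<exists>U F. open U \<and> range complex_of_real \<subseteq> U \<and> F holomorphic_on U
                        \<and> (\<forall>x. F (complex_of_real x) = f x)}"

text \<open>Continuous seminorms of the locally convex inductive limit topology
  ind_{U \<supset> R} H(U): seminorms on A(R) whose pull-back to every H(U) (via restriction
  to the real line) is continuous for the compact-open topology, i.e. dominated by
  C times the sup-norm over some compact K \<subseteq> U.\<close>
definition cont_seminorm :: "((real \<Rightarrow> complex) \<Rightarrow> real) \<Rightarrow> bool" where
  "cont_seminorm p \<longleftrightarrow>
     (\<forall>f\<in>real_analytic. \<forall>g\<in>real_analytic. p (\<lambda>x. f x + g x) \<le> p f + p g) \<and>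
     (\<forall>f\<in>real_analytic. \<forall>c::complex. p (\<lambda>x. c * f x) = cmod c * p f) \<and>
     (\<forall>U. open U \<and> range complex_of_real \<subseteq> U \<longrightarrow>
        (\<exists>K C. compact K \<and> K \<subseteq> U \<and>
           (\<forall>F B. F holomorphic_on U \<and> 0 \<le> B \<and> (\<forall>z\<in>K. cmod (F z) \<le> B) \<longrightarrow>
                  p (\<lambda>x. F (complex_of_real x)) \<le> C * B)))"

definition tendsto_A :: "('b \<Rightarrow> (real \<Rightarrow> complex)) \<Rightarrow> (real \<Rightarrow> complex) \<Rightarrow> 'b filter \<Rightarrow> bool" where
  "tendsto_A g h F \<longleftrightarrow> (\<forall>p. cont_seminorm p \<longrightarrow> ((\<lambda>t. p (\<lambda>x. g t x - h x)) \<longlongrightarrow> 0) F)"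

definition cont_linear_op :: "((real \<Rightarrow> complex) \<Rightarrow> (real \<Rightarrow> complex)) \<Rightarrow> bool" where
  "cont_linear_op T \<longleftrightarrow>
     (\<forall>f\<in>real_analytic. T f \<in> real_analytic) \<and>
     (\<forall>f\<in>real_analytic. \<forall>g\<in>real_analytic. T (\<lambda>x. f x + g x) = (\<lambda>x. T f x + T g x)) \<and>
     (\<forall>f\<in>real_analytic. \<forall>c::complex. T (\<lambda>x. c * f x) = (\<lambda>x. c * T f x)) \<and>
     (\<forall>p. cont_seminorm p \<longrightarrow> cont_seminorm (\<lambda>f. p (T f)))"

definition C0_semigroup :: "(real \<Rightarrow> (real \<Rightarrow> complex) \<Rightarrow> (real \<Rightarrow> complex)) \<Rightarrow> bool" where
  "C0_semigroup T \<longleftrightarrow>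
     (\<forall>t\<ge>0. cont_linear_op (T t)) \<and>
     (\<forall>t\<ge>0. \<forall>s\<ge>0. \<forall>f\<in>real_analytic. T t (T s f) = T (t + s) f) \<and>
     (\<forall>f\<in>real_analytic. T 0 f = f) \<and>
     (\<forall>f\<in>real_analytic. \<forall>t0\<ge>0. tendsto_A (\<lambda>t. T t f) (T t0 f) (at t0 within {0..}))"

text \<open>The generator of T has domain all of A(R) and equals the operator A.\<close>
definition generates :: "((real \<Rightarrow> complex) \<Rightarrow> (real \<Rightarrow> complex)) \<Rightarrow>
    (real \<Rightarrow> (real \<Rightarrow> complex) \<Rightarrow> (real \<Rightarrow> complex)) \<Rightarrow> bool" where
  "generates A T \<longleftrightarrow> C0_semigroup T \<and>
     (\<forall>f\<in>real_analytic.
        tendsto_A (\<lambda>t. (\<lambda>x. (T t f x - f x) / complex_of_real t)) (A f) (at_right 0))"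

definition euler_op :: "(real \<Rightarrow> complex) \<Rightarrow> (real \<Rightarrow> complex)" where
  "euler_op f = (\<lambda>x. complex_of_real x * vector_derivative f (at x))"

definition poly_euler :: "(nat \<Rightarrow> complex) \<Rightarrow> nat \<Rightarrow> (real \<Rightarrow> complex) \<Rightarrow> (real \<Rightarrow> complex)" where
  "poly_euler a K f = (\<lambda>x. \<Sum>k\<le>K. a k * (euler_op ^^ k) f x)"

end

theory Submission
  imports Defs "HOL-Computational_Algebra.Polynomial"
begin

(*
  The monomials x^m are eigenfunctions of P(\<theta>) with eigenvalues P(m). If P(\<theta>) generated a
  C_0-semigroup T, then the orbit of x^m evaluated at any point would solve u' = P(m) u from the
  right, so T_t x^m = e^{t P(m)} x^m. Continuity of f \<mapsto> (T_t f)(y) on the inductive limit bounds it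
  by C sup_L |f| for a compact L inside any prescribed neighbourhood of the real line.

  (1) Taking the whole plane as neighbourhood gives |e^{P(m)}| = |(T_1 x^m)(1)| \<le> C R^m, whereas
  Re P(m) grows like m^l with l \<ge> 2.

  (2) If a_2, ..., a_K \<in> iQ, a suitable t makes e^{t P(m)} a geometric sequence times an N-periodic
  one, hence an exponential sum A \<Sigma>_j b_j d_j^m by the discrete Fourier transform; since P is not
  linear, at least two b_j are nonzero, and the d_j can be arranged to have distinct imaginary parts.
  Applying T_t to e^{-inx} and using continuity on a thin strip |Im z| < \<epsilon> bounds
  A \<Sigma>_j b_j e^{-i n d_j y} by C e^{n \<epsilon>} for y = \<plusminus>1, while the term with the extreme imaginary part
  grows like e^{n |Im d_j|}.
*)

section \<open>Functions with vanishing right derivative\<close>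

lemma right_derivative_zero_imp_norm_le:
  fixes v :: "real \<Rightarrow> 'a::real_normed_vector"
  assumes cont: "continuous_on {0..} v" and v0: "v 0 = 0"
    and der: "\<And>s. s \<ge> 0 \<Longrightarrow> ((\<lambda>h. (v (s + h) - v s) /\<^sub>R h) \<longlongrightarrow> 0) (at_right 0)"
    and b: "b \<ge> 0" and e: "\<epsilon> > 0"
  shows "norm (v b) \<le> \<epsilon> * b"
proof -
  define Z where "Z = {s \<in> {0..b}. norm (v s) \<le> \<epsilon> * s}"
  define s0 where "s0 = Sup Z"
  have "closed Z"
    unfolding Z_def by (intro continuous_on_closed_Collect_le continuous_intros
        continuous_on_subset[OF cont]) auto
  moreover have "0 \<in> Z" "bdd_above Z" using b v0 by (auto simp: Z_def intro: bdd_aboveI[of _ b])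
  ultimately have "s0 \<in> Z" unfolding s0_def by (intro closed_contains_Sup) auto
  have "s0 = b"
  proof (rule ccontr)
    assume "s0 \<noteq> b"
    with \<open>s0 \<in> Z\<close> have s0: "0 \<le> s0" "s0 < b" "norm (v s0) \<le> \<epsilon> * s0" by (auto simp: Z_def)
    have "\<forall>\<^sub>F h in at_right 0. norm ((v (s0 + h) - v s0) /\<^sub>R h) < \<epsilon>"
      using der[OF s0(1)] e by (auto simp: tendsto_iff dist_norm)
    then obtain d where "d > 0" and d: "\<And>h. 0 < h \<Longrightarrow> h < d \<Longrightarrow> norm ((v (s0 + h) - v s0) /\<^sub>R h) < \<epsilon>"
      unfolding eventually_at_right_field by auto
    define h where "h = min d (b - s0) / 2"
    have h: "0 < h" "h < d" "s0 + h \<le> b"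
      using \<open>d > 0\<close> s0(2) by (auto simp: h_def min_def field_simps)
    then have "norm (v (s0 + h) - v s0) < \<epsilon> * h"
      using d[OF h(1,2)] by (simp add: divide_simps)
    with s0(3) have "norm (v (s0 + h)) \<le> \<epsilon> * (s0 + h)"
      using norm_triangle_sub[of "v (s0 + h)" "v s0"] by (simp add: algebra_simps)
    with h s0(1) have "s0 + h \<in> Z" by (simp add: Z_def)
    then have "s0 + h \<le> s0" unfolding s0_def using \<open>bdd_above Z\<close> by (rule cSup_upper)
    with h show False by simp
  qed
  with \<open>s0 \<in> Z\<close> show ?thesis by (simp add: Z_def)
qed

lemma right_derivative_zero_imp_zero:
  fixes v :: "real \<Rightarrow> 'a::real_normed_vector"
  assumes "continuous_on {0..} v" "v 0 = 0"
    and "\<And>s. s \<ge> 0 \<Longrightarrow> ((\<lambda>h. (v (s + h) - v s) /\<^sub>R h) \<longlongrightarrow> 0) (at_right 0)"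
    and t: "t \<ge> 0"
  shows "v t = 0"
proof -
  have "norm (v t) \<le> 0 + \<epsilon>" if "\<epsilon> > 0" for \<epsilon>
  proof -
    have "norm (v t) \<le> \<epsilon> / (t + 1) * t"
      using right_derivative_zero_imp_norm_le[OF assms, of "\<epsilon> / (t + 1)"] t that by simp
    also have "\<dots> \<le> \<epsilon>" using t that by (simp add: field_simps)
    finally show ?thesis by simp
  qed
  then show ?thesis by (metis field_le_epsilon norm_le_zero_iff)
qed

lemma right_difference_quotient_exp:
  fixes c :: complex
  shows "((\<lambda>h. (exp (of_real (s + h) * c) - exp (of_real s * c)) / of_real h)
     \<longlongrightarrow> c * exp (of_real s * c)) (at_right (0::real))"
proof -
  have "((\<lambda>z. exp (z * c)) has_field_derivative c * exp (of_real s * c)) (at (of_real s))"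
    by (auto intro!: derivative_eq_intros)
  then have "((\<lambda>k. (exp ((of_real s + k) * c) - exp (of_real s * c)) / k)
      \<longlongrightarrow> c * exp (of_real s * c)) (at 0)"
    by (simp add: DERIV_def)
  moreover have "filterlim (\<lambda>h::real. complex_of_real h) (at 0) (at_right 0)"
    by (auto simp: filterlim_at eventually_at_right_field intro!: tendsto_eq_intros exI[of _ 1])
  ultimately show ?thesis
    using filterlim_compose by (fastforce simp: algebra_simps)
qed

lemma right_derivative_linear_ode_unique:
  fixes u :: "real \<Rightarrow> complex"
  assumes cont: "continuous_on {0..} u"
    and der: "\<And>s. s \<ge> 0 \<Longrightarrow> ((\<lambda>h. (u (s + h) - u s) / of_real h) \<longlongrightarrow> c * u s) (at_right 0)"
    and t: "t \<ge> 0"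
  shows "u t = exp (of_real t * c) * u 0"
proof -
  define v where "v = (\<lambda>s. exp (of_real s * - c) * u s - u 0)"
  have der_v: "((\<lambda>h. (v (s + h) - v s) /\<^sub>R h) \<longlongrightarrow> 0) (at_right 0)" if s: "s \<ge> 0" for s
  proof -
    have quotient: "(v (s + h) - v s) /\<^sub>R h =
       exp (of_real (s + h) * - c) * ((u (s + h) - u s) / of_real h) +
       u s * ((exp (of_real (s + h) * - c) - exp (of_real s * - c)) / of_real h)" for h
    proof -
      have "v (s + h) - v s = exp (of_real (s + h) * - c) * (u (s + h) - u s) +
          u s * (exp (of_real (s + h) * - c) - exp (of_real s * - c))"
        unfolding v_def by (simp add: algebra_simps)
      moreover have "(v (s + h) - v s) /\<^sub>R h = (v (s + h) - v s) / of_real h"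
        by (simp add: scaleR_conv_of_real field_simps)
      ultimately show ?thesis by (simp only: add_divide_distrib times_divide_eq_right)
    qed
    have "((\<lambda>h. exp (of_real (s + h) * - c) * ((u (s + h) - u s) / of_real h) +
       u s * ((exp (of_real (s + h) * - c) - exp (of_real s * - c)) / of_real h))
      \<longlongrightarrow> exp (of_real (s + 0) * - c) * (c * u s) + u s * (- c * exp (of_real s * - c))) (at_right 0)"
      by (intro tendsto_intros der s right_difference_quotient_exp)
    then show ?thesis unfolding quotient by (simp add: algebra_simps)
  qed
  have "continuous_on {0..} v" unfolding v_def by (intro continuous_intros cont)
  moreover have "v 0 = 0" by (simp add: v_def)
  ultimately have "v t = 0" using der_v t by (rule right_derivative_zero_imp_zero)
  then show ?thesis by (simp add: v_def exp_minus field_simps)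
qed

section \<open>Monomials as eigenfunctions of the semigroup\<close>

definition monomial :: "nat \<Rightarrow> real \<Rightarrow> complex" where
  "monomial m x = complex_of_real x ^ m"

definition euler_symbol :: "(nat \<Rightarrow> complex) \<Rightarrow> nat \<Rightarrow> nat \<Rightarrow> complex" where
  "euler_symbol a K m = (\<Sum>k\<le>K. a k * of_nat m ^ k)"

lemma real_analytic_entire:
  assumes "F holomorphic_on UNIV"
  shows "(\<lambda>x. F (complex_of_real x)) \<in> real_analytic"
  using assms unfolding real_analytic_def by blast

lemma real_analytic_monomial: "monomial m \<in> real_analytic"
proof -
  have "(\<lambda>z. z ^ m) holomorphic_on UNIV" by (intro holomorphic_intros)
  from real_analytic_entire[OF this] show ?thesis by (simp add: monomial_def[abs_def])
qed

lemma real_analytic_add: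
  assumes "f \<in> real_analytic" "g \<in> real_analytic"
  shows "(\<lambda>x. f x + g x) \<in> real_analytic"
proof -
  obtain U F V G where "open U" "range complex_of_real \<subseteq> U" "F holomorphic_on U"
      "\<forall>x. F (complex_of_real x) = f x" "open V" "range complex_of_real \<subseteq> V"
      "G holomorphic_on V" "\<forall>x. G (complex_of_real x) = g x"
    using assms unfolding real_analytic_def by blast
  moreover have "(\<lambda>z. F z + G z) holomorphic_on U \<inter> V"
    using \<open>F holomorphic_on U\<close> \<open>G holomorphic_on V\<close>
    by (intro holomorphic_on_add) (auto elim: holomorphic_on_subset)
  ultimately show ?thesis unfolding real_analytic_def
    by (intro CollectI exI[of _ "U \<inter> V"] exI[of _ "\<lambda>z. F z + G z"]) auto
qed

lemma real_analytic_cmult: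
  assumes "f \<in> real_analytic"
  shows "(\<lambda>x. c * f x) \<in> real_analytic"
proof -
  obtain U F where "open U" "range complex_of_real \<subseteq> U" "F holomorphic_on U"
      "\<forall>x. F (complex_of_real x) = f x"
    using assms unfolding real_analytic_def by blast
  then show ?thesis unfolding real_analytic_def
    by (intro CollectI exI[of _ U] exI[of _ "\<lambda>z. c * F z"]) (auto intro!: holomorphic_intros)
qed

lemma real_analytic_sum:
  assumes "finite I" "\<And>i. i \<in> I \<Longrightarrow> f i \<in> real_analytic"
  shows "(\<lambda>x. \<Sum>i\<in>I. w i * f i x) \<in> real_analytic"
  using assms
proof (induction I rule: finite_induct)
  case empty
  show ?case using real_analytic_entire[of "\<lambda>_. 0"] by simp
next
  case (insert i I)
  then show ?case by (simp add: real_analytic_add real_analytic_cmult)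
qed

lemma has_vector_derivative_monomial:
  "(monomial m has_vector_derivative of_nat m * complex_of_real x ^ (m - 1)) (at x)"
proof -
  have "((\<lambda>z. z ^ m) has_field_derivative of_nat m * complex_of_real x ^ (m - 1)) (at (of_real x))"
    by (auto intro!: derivative_eq_intros)
  from has_vector_derivative_real_field[OF this] show ?thesis
    by (simp add: monomial_def[abs_def])
qed

lemma euler_op_cmult_monomial:
  "euler_op (\<lambda>x. c * monomial m x) = (\<lambda>x. of_nat m * c * monomial m x)"
proof
  fix x :: real
  have "vector_derivative (\<lambda>x. c * monomial m x) (at x) = c * (of_nat m * complex_of_real x ^ (m - 1))"
    by (intro vector_derivative_at has_vector_derivative_mult_right has_vector_derivative_monomial)
  then show "euler_op (\<lambda>x. c * monomial m x) x = of_nat m * c * monomial m x"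
    by (cases m) (auto simp: euler_op_def monomial_def algebra_simps)
qed

lemma euler_op_power_monomial:
  "(euler_op ^^ k) (monomial m) = (\<lambda>x. of_nat m ^ k * monomial m x)"
proof (induction k)
  case 0
  show ?case by simp
next
  case (Suc k)
  then show ?case by (simp add: euler_op_cmult_monomial mult.assoc)
qed

lemma poly_euler_monomial:
  "poly_euler a K (monomial m) = (\<lambda>x. euler_symbol a K m * monomial m x)"
  by (simp add: poly_euler_def euler_symbol_def euler_op_power_monomial sum_distrib_left mult_ac)

lemma cont_seminorm_eval: "cont_seminorm (\<lambda>f. cmod (f y))"
  unfolding cont_seminorm_def
proof (intro conjI ballI allI impI)
  fix U :: "complex set"
  assume "open U \<and> range complex_of_real \<subseteq> U"
  then show "\<exists>K C. compact K \<and> K \<subseteq> U \<and> (\<forall>F B. F holomorphic_on U \<and> 0 \<le> B \<and>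
      (\<forall>z\<in>K. cmod (F z) \<le> B) \<longrightarrow> cmod (F (complex_of_real y)) \<le> C * B)"
    by (intro exI[of _ "{complex_of_real y}"] exI[of _ 1]) auto
qed (auto simp: norm_mult norm_triangle_ineq)

lemma cont_seminorm_comp:
  "cont_linear_op T \<Longrightarrow> cont_seminorm p \<Longrightarrow> cont_seminorm (\<lambda>f. p (T f))"
  unfolding cont_linear_op_def by blast

lemma cont_linear_op_lincomb:
  assumes T: "cont_linear_op T" and f: "f \<in> real_analytic" and g: "g \<in> real_analytic"
  shows "T (\<lambda>x. \<alpha> * f x + \<beta> * g x) = (\<lambda>x. \<alpha> * T f x + \<beta> * T g x)"
proof -
  have add: "\<forall>f\<in>real_analytic. \<forall>g\<in>real_analytic. T (\<lambda>x. f x + g x) = (\<lambda>x. T f x + T g x)"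
    and cmult: "\<forall>f\<in>real_analytic. \<forall>c. T (\<lambda>x. c * f x) = (\<lambda>x. c * T f x)"
    using T unfolding cont_linear_op_def by blast+
  from add[rule_format, OF real_analytic_cmult[OF f] real_analytic_cmult[OF g]] f g cmult
  show ?thesis by simp
qed

lemma cont_linear_op_sum:
  assumes T: "cont_linear_op T" and "finite I" and f: "\<And>i. i \<in> I \<Longrightarrow> f i \<in> real_analytic"
  shows "T (\<lambda>x. \<Sum>i\<in>I. w i * f i x) = (\<lambda>x. \<Sum>i\<in>I. w i * T (f i) x)"
  using \<open>finite I\<close> f
proof (induction I rule: finite_induct)
  case empty
  have "T (\<lambda>x. 0 * monomial 0 x + 0 * monomial 0 x) = (\<lambda>x. 0 * T (monomial 0) x + 0 * T (monomial 0) x)"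
    by (intro cont_linear_op_lincomb T real_analytic_monomial)
  then show ?case by simp
next
  case (insert i I)
  then have "(\<lambda>x. \<Sum>j\<in>I. w j * f j x) \<in> real_analytic" by (auto intro: real_analytic_sum)
  from cont_linear_op_lincomb[OF T _ this, of "f i" "w i" 1] insert show ?case by simp
qed

lemma generates_cont_linear_op: "generates A T \<Longrightarrow> t \<ge> 0 \<Longrightarrow> cont_linear_op (T t)"
  unfolding generates_def C0_semigroup_def by blast

lemma C0_semigroup_orbit_continuous:
  assumes "C0_semigroup T" "f \<in> real_analytic"
  shows "continuous_on {0..} (\<lambda>s. T s f y)"
  unfolding continuous_on_def
proof
  fix s :: real
  assume "s \<in> {0..}"
  then have "tendsto_A (\<lambda>t. T t f) (T s f) (at s within {0..})"
    using assms unfolding C0_semigroup_def by auto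
  then have "((\<lambda>t. cmod (T t f y - T s f y)) \<longlongrightarrow> 0) (at s within {0..})"
    unfolding tendsto_A_def using cont_seminorm_eval[of y] by blast
  then show "((\<lambda>t. T t f y) \<longlongrightarrow> T s f y) (at s within {0..})"
    by (simp add: tendsto_norm_zero_iff LIM_zero_iff)
qed

lemma generator_eigenfunction_right_derivative:
  assumes gen: "generates A T" and f: "f \<in> real_analytic" and Af: "A f = (\<lambda>x. c * f x)"
    and s: "s \<ge> 0"
  shows "((\<lambda>h. (T (s + h) f y - T s f y) / of_real h) \<longlongrightarrow> c * T s f y) (at_right 0)"
proof -
  have T_s: "cont_linear_op (T s)" using gen s by (rule generates_cont_linear_op)
  have "((\<lambda>h. cmod (T s (\<lambda>x. (T h f x - f x) / of_real h - A f x) y)) \<longlongrightarrow> 0) (at_right 0)"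
    using gen f cont_seminorm_comp[OF T_s cont_seminorm_eval]
    unfolding generates_def tendsto_A_def by blast
  moreover have "T s (\<lambda>x. (T h f x - f x) / of_real h - A f x) y =
      (T (s + h) f y - T s f y) / of_real h - c * T s f y" if h: "h > 0" for h
  proof -
    have T_h: "T h f \<in> real_analytic"
      using generates_cont_linear_op[OF gen] h f unfolding cont_linear_op_def by auto
    have quotient: "(\<lambda>x. (T h f x - f x) / of_real h - A f x) =
        (\<lambda>x. (1 / of_real h) * T h f x + (- 1 / of_real h - c) * f x)"
      using h by (auto simp: Af field_simps)
    have "T s (\<lambda>x. (T h f x - f x) / of_real h - A f x) =
        (\<lambda>x. (1 / of_real h) * T s (T h f) x + (- 1 / of_real h - c) * T s f x)"
      unfolding quotient by (rule cont_linear_op_lincomb[OF T_s T_h f])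
    moreover have "T s (T h f) = T (s + h) f"
      using gen s h f unfolding generates_def C0_semigroup_def by auto
    ultimately show ?thesis using h by (simp add: field_simps)
  qed
  then have "\<forall>\<^sub>F h in at_right 0. cmod (T s (\<lambda>x. (T h f x - f x) / of_real h - A f x) y) =
      cmod ((T (s + h) f y - T s f y) / of_real h - c * T s f y)"
    by (auto simp: eventually_at_right_field intro: exI[of _ 1])
  ultimately have "((\<lambda>h. cmod ((T (s + h) f y - T s f y) / of_real h - c * T s f y)) \<longlongrightarrow> 0)
      (at_right 0)"
    by (rule Lim_transform_eventually)
  then show ?thesis by (simp add: tendsto_norm_zero_iff LIM_zero_iff)
qed

lemma generator_eigenfunction_orbit:
  assumes gen: "generates A T" and f: "f \<in> real_analytic" and Af: "A f = (\<lambda>x. c * f x)"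
    and t: "t \<ge> 0"
  shows "T t f y = exp (of_real t * c) * f y"
proof -
  have C0: "C0_semigroup T" using gen by (simp add: generates_def)
  have "T t f y = exp (of_real t * c) * T 0 f y"
    using C0_semigroup_orbit_continuous[OF C0 f] generator_eigenfunction_right_derivative[OF gen f Af] t
    by (rule right_derivative_linear_ode_unique)
  with C0 f show ?thesis by (simp add: C0_semigroup_def)
qed

lemma generates_poly_euler_monomial:
  assumes "generates (poly_euler a K) T" "t \<ge> 0"
  shows "T t (monomial m) = (\<lambda>x. exp (of_real t * euler_symbol a K m) * monomial m x)"
  using generator_eigenfunction_orbit[OF assms(1) real_analytic_monomial poly_euler_monomial assms(2)]
  by blast

section \<open>A leading coefficient with positive real part\<close>

lemma cont_seminorm_monomial_bound:
  assumes "cont_seminorm p"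
  obtains R C where "R \<ge> 1" "\<And>m. p (monomial m) \<le> C * R ^ m"
proof -
  have "\<exists>L C. compact L \<and> L \<subseteq> UNIV \<and> (\<forall>F B. F holomorphic_on UNIV \<and> 0 \<le> B \<and>
      (\<forall>z\<in>L. cmod (F z) \<le> B) \<longrightarrow> p (\<lambda>x. F (complex_of_real x)) \<le> C * B)"
    using assms unfolding cont_seminorm_def by blast
  then obtain L C where "compact L" and bound: "\<And>F B. F holomorphic_on UNIV \<Longrightarrow> 0 \<le> B \<Longrightarrow>
      (\<forall>z\<in>L. cmod (F z) \<le> B) \<Longrightarrow> p (\<lambda>x. F (complex_of_real x)) \<le> C * B"
    by blast
  obtain R0 where R0: "\<forall>z\<in>L. norm z \<le> R0"
    using compact_imp_bounded[OF \<open>compact L\<close>] by (auto simp: bounded_iff)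
  define R where "R = max R0 1"
  have "p (monomial m) \<le> C * R ^ m" for m
  proof -
    have "\<forall>z\<in>L. cmod (z ^ m) \<le> R ^ m"
      using R0 unfolding R_def by (auto simp: norm_power intro!: power_mono)
    moreover have "(\<lambda>z. z ^ m) holomorphic_on UNIV" by (intro holomorphic_intros)
    ultimately show ?thesis
      using bound[of "\<lambda>z. z ^ m" "R ^ m"] by (simp add: R_def monomial_def[abs_def])
  qed
  then show thesis by (intro that[of R]) (auto simp: R_def)
qed

lemma Re_euler_symbol: "Re (euler_symbol a K m) = (\<Sum>k\<le>K. Re (a k) * real m ^ k)"
  unfolding euler_symbol_def by (simp add: Re_sum flip: of_nat_power)

lemma Re_euler_symbol_lower_bound:
  assumes "l \<le> K" "\<forall>k. l < k \<and> k \<le> K \<longrightarrow> Re (a k) = 0" "m \<ge> 1"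
  shows "Re (a l) * real m ^ l - (\<Sum>k<l. \<bar>Re (a k)\<bar>) * real m ^ (l - 1) \<le> Re (euler_symbol a K m)"
proof -
  have "(\<Sum>k<l. - \<bar>Re (a k)\<bar> * real m ^ (l - 1)) \<le> (\<Sum>k<l. Re (a k) * real m ^ k)"
  proof (rule sum_mono)
    fix k assume "k \<in> {..<l}"
    then have "real m ^ k \<le> real m ^ (l - 1)" using assms(3) by (intro power_increasing) auto
    then have "\<bar>Re (a k)\<bar> * real m ^ k \<le> \<bar>Re (a k)\<bar> * real m ^ (l - 1)" by (simp add: mult_left_mono)
    moreover have "- \<bar>Re (a k)\<bar> * real m ^ k \<le> Re (a k) * real m ^ k"
      by (rule mult_right_mono) auto
    ultimately show "- \<bar>Re (a k)\<bar> * real m ^ (l - 1) \<le> Re (a k) * real m ^ k" by linarith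
  qed
  moreover have "Re (euler_symbol a K m) = (\<Sum>k\<le>l. Re (a k) * real m ^ k)"
    unfolding Re_euler_symbol using assms(1,2) by (intro sum.mono_neutral_right) auto
  ultimately show ?thesis by (simp add: lessThan_Suc_atMost[symmetric] sum_distrib_right sum_negf)
qed

lemma Re_euler_symbol_superlinear:
  assumes l: "2 \<le> l" "l \<le> K" "\<forall>k. l < k \<and> k \<le> K \<longrightarrow> Re (a k) = 0" "Re (a l) > 0"
  shows "\<exists>m. Re (euler_symbol a K m) > \<alpha> + \<beta> * real m"
proof -
  define A where "A = (\<Sum>k<l. \<bar>Re (a k)\<bar>)"
  define B where "B = \<bar>\<alpha>\<bar> + \<bar>\<beta>\<bar> + 1"
  define m where "m = nat \<lceil>(A + B) / Re (a l)\<rceil> + 1"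
  have m1: "real m \<ge> 1" unfolding m_def by simp
  have "real m \<ge> (A + B) / Re (a l)" unfolding m_def by linarith
  then have mB: "Re (a l) * real m - A \<ge> B" using l(4) by (simp add: field_simps)
  have "B \<ge> 0" by (simp add: B_def)
  have "real m ^ 1 \<le> real m ^ (l - 1)" using m1 l by (intro power_increasing) auto
  then have "real m * B \<le> real m ^ (l - 1) * (Re (a l) * real m - A)"
    using m1 mB \<open>B \<ge> 0\<close> by (intro mult_mono) auto
  also have "\<dots> = Re (a l) * real m ^ l - A * real m ^ (l - 1)"
    using l by (cases l) (auto simp: algebra_simps)
  also have "\<dots> \<le> Re (euler_symbol a K m)"
    unfolding A_def using l m1 by (intro Re_euler_symbol_lower_bound) auto
  finally have "real m * B \<le> Re (euler_symbol a K m)" .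
  moreover have "\<alpha> + \<beta> * real m < real m * B"
  proof -
    have "\<beta> * real m \<le> \<bar>\<beta>\<bar> * real m" using m1 by (intro mult_right_mono) auto
    moreover have "1 * (\<bar>\<alpha>\<bar> + 1) \<le> real m * (\<bar>\<alpha>\<bar> + 1)" using m1 by (intro mult_right_mono) auto
    ultimately show ?thesis unfolding B_def by (simp add: algebra_simps)
  qed
  ultimately show ?thesis by (intro exI[of _ m]) linarith
qed

lemma not_generates_if_real_part_dominant:
  assumes "2 \<le> l" "l \<le> K" "\<forall>k. l < k \<and> k \<le> K \<longrightarrow> Re (a k) = 0" "Re (a l) > 0"
  shows "\<not> generates (poly_euler a K) T"
proof
  assume gen: "generates (poly_euler a K) T"
  have "cont_seminorm (\<lambda>f. cmod (T 1 f 1))"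
    using generates_cont_linear_op[OF gen zero_le_one] cont_seminorm_eval by (rule cont_seminorm_comp)
  then obtain R C where "R \<ge> 1" and bound: "\<And>m. cmod (T 1 (monomial m) 1) \<le> C * R ^ m"
    using cont_seminorm_monomial_bound by blast
  have exp_bound: "exp (Re (euler_symbol a K m)) \<le> C * R ^ m" for m
    using bound[of m] by (simp add: generates_poly_euler_monomial[OF gen] monomial_def norm_exp_eq_Re)
  have "C > 0" using exp_bound[of 0] by (simp add: less_le_trans[OF exp_gt_zero])
  have "Re (euler_symbol a K m) \<le> ln C + real m * ln R" for m
  proof -
    have "C * R ^ m = exp (ln C + real m * ln R)"
      using \<open>C > 0\<close> \<open>R \<ge> 1\<close> by (simp add: exp_add exp_of_nat_mult)
    then show ?thesis using exp_bound[of m] by simp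
  qed
  with Re_euler_symbol_superlinear[OF assms, of "ln C" "ln R"] show False
    by (auto simp: mult.commute not_less[symmetric])
qed

section \<open>Roots of unity and the discrete Fourier transform\<close>

definition unit_root :: "nat \<Rightarrow> int \<Rightarrow> complex" where
  "unit_root N a = exp (2 * of_real pi * \<i> * of_int a / of_nat N)"

lemma unit_root_add: "unit_root N (a + b) = unit_root N a * unit_root N b"
  unfolding unit_root_def by (simp add: distrib_left add_divide_distrib exp_add)

lemma unit_root_mult_of_nat: "unit_root N (int j * a) = unit_root N a ^ j"
  unfolding unit_root_def by (simp add: exp_of_nat_mult[symmetric] mult_ac)

lemma unit_root_eq_iff:
  assumes "N > 0"
  shows "unit_root N a = unit_root N b \<longleftrightarrow> int N dvd (a - b)"
proof -
  have "unit_root N a = unit_root N b \<longleftrightarrow>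
      (\<exists>n::int. 2 * pi * \<i> * of_int a / of_nat N = 2 * pi * \<i> * of_int b / of_nat N + 2 * pi * \<i> * of_int n)"
    unfolding unit_root_def exp_eq by (simp add: algebra_simps)
  also have "\<dots> \<longleftrightarrow> (\<exists>n::int. complex_of_int a = of_int (b + n * int N))"
  proof (intro ex_cong1)
    fix n :: int
    have "2 * pi * \<i> / of_nat N \<noteq> (0::complex)" using assms by simp
    moreover have "2 * pi * \<i> * of_int a / of_nat N = 2 * pi * \<i> * of_int b / of_nat N + 2 * pi * \<i> * of_int n
        \<longleftrightarrow> (2 * pi * \<i> / of_nat N) * of_int a = (2 * pi * \<i> / of_nat N) * (of_int (b + n * int N) :: complex)"
      using assms by (simp add: field_simps)
    ultimately show "2 * pi * \<i> * of_int a / of_nat N = 2 * pi * \<i> * of_int b / of_nat N + 2 * pi * \<i> * of_int n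
        \<longleftrightarrow> complex_of_int a = of_int (b + n * int N)"
      by simp
  qed
  also have "\<dots> \<longleftrightarrow> (\<exists>n::int. a - b = int N * n)"
    unfolding of_int_eq_iff by (intro ex_cong1) (auto simp: algebra_simps)
  also have "\<dots> \<longleftrightarrow> int N dvd (a - b)" by (simp add: dvd_def)
  finally show ?thesis .
qed

lemma sum_unit_root_powers:
  assumes "N > 0"
  shows "(\<Sum>j<N. unit_root N (int j * a)) = (if int N dvd a then of_nat N else 0)"
proof -
  have sum: "(\<Sum>j<N. unit_root N (int j * a)) = (\<Sum>j<N. unit_root N a ^ j)"
    by (simp add: unit_root_mult_of_nat)
  have "unit_root N a = 1 \<longleftrightarrow> int N dvd a"
    using unit_root_eq_iff[OF assms, of a 0] by (simp add: unit_root_def)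
  moreover have "unit_root N a ^ N = unit_root N (int N * a)"
    by (simp add: unit_root_mult_of_nat)
  moreover have "unit_root N (int N * a) = unit_root N 0"
    using unit_root_eq_iff[OF assms] by simp
  moreover have "unit_root N 0 = 1" by (simp add: unit_root_def)
  ultimately show ?thesis using sum by (auto simp: sum_gp_strict)
qed

definition dft :: "nat \<Rightarrow> (nat \<Rightarrow> complex) \<Rightarrow> nat \<Rightarrow> complex" where
  "dft N c j = (\<Sum>r<N. c r * unit_root N (- (int j * int r))) / of_nat N"

lemma dft_inversion:
  assumes N: "N > 0" and periodic: "\<And>m. c m = c (m mod N)"
  shows "c m = (\<Sum>j<N. dft N c j * unit_root N (int j * int m))"
proof -
  have dvd_iff: "int N dvd (int m - int r) \<longleftrightarrow> r = m mod N" if "r < N" for r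
    using that by (metis mod_eq_dvd_iff mod_less of_nat_eq_iff zmod_int)
  have "(\<Sum>j<N. dft N c j * unit_root N (int j * int m))
      = (\<Sum>j<N. \<Sum>r<N. c r * unit_root N (int j * (int m - int r))) / of_nat N"
    unfolding dft_def sum_divide_distrib sum_distrib_right
    by (intro sum.cong refl) (simp add: mult.assoc unit_root_add[symmetric] algebra_simps)
  also have "\<dots> = (\<Sum>r<N. c r * (\<Sum>j<N. unit_root N (int j * (int m - int r)))) / of_nat N"
    by (subst sum.swap) (simp add: sum_distrib_left)
  also have "\<dots> = (\<Sum>r<N. if r = m mod N then c r * of_nat N else 0) / of_nat N"
    by (intro arg_cong2[where f = "(/)"] sum.cong refl) (auto simp: sum_unit_root_powers[OF N] dvd_iff)
  also have "\<dots> = c m" using N periodic[of m] by (simp add: sum.delta)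
  finally show ?thesis ..
qed

lemma dft_single_coefficient_multiplicative:
  assumes N: "N > 0" and periodic: "\<And>m. c m = c (m mod N)"
    and single: "\<And>i j. i < N \<Longrightarrow> j < N \<Longrightarrow> dft N c i \<noteq> 0 \<Longrightarrow> dft N c j \<noteq> 0 \<Longrightarrow> i = j"
  shows "c (Suc m) * c 0 = c 1 * c m"
proof (cases "\<exists>i<N. dft N c i \<noteq> 0")
  case True
  then obtain i where i: "i < N" "dft N c i \<noteq> 0" by blast
  have "c m = dft N c i * unit_root N (int i) ^ m" for m
  proof -
    have "c m = (\<Sum>j\<in>{i}. dft N c j * unit_root N (int j * int m))"
      unfolding dft_inversion[where c = c, OF N periodic, of m] using i single
      by (intro sum.mono_neutral_right) auto
    moreover have "unit_root N (int i * int m) = unit_root N (int i) ^ m"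
      by (metis mult.commute unit_root_mult_of_nat)
    ultimately show ?thesis by simp
  qed
  then show ?thesis by (simp add: algebra_simps)
next
  case False
  then show ?thesis using dft_inversion[where c = c, OF N periodic] by simp
qed

lemma geometric_times_periodic_as_exp_sum:
  fixes w :: complex
  assumes "N > 0" and periodic: "\<And>m. c m = c (m mod N)"
  shows "w ^ m * c m = (\<Sum>j<N. dft N c j * (w * unit_root N (int j)) ^ m)"
proof -
  have "unit_root N (int j * int m) = unit_root N (int j) ^ m" for j
    by (metis mult.commute unit_root_mult_of_nat)
  then show ?thesis
    by (simp add: dft_inversion[where c = c, OF assms, of m] sum_distrib_left power_mult_distrib mult_ac)
qed

section \<open>Growth of exponential sums under a continuous operator\<close>

lemma norm_exp_minus_partial_sum_le:
  fixes v :: complex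
  assumes "cmod v \<le> X"
  shows "cmod (exp v - (\<Sum>m<k. v ^ m /\<^sub>R fact m)) \<le> exp X - (\<Sum>m<k. X ^ m /\<^sub>R fact m)"
proof -
  have tail_v: "(\<lambda>i. v ^ (i + k) /\<^sub>R fact (i + k)) sums (exp v - (\<Sum>m<k. v ^ m /\<^sub>R fact m))"
    using sums_iff_shift[of "\<lambda>m. v ^ m /\<^sub>R fact m" k] exp_converges[of v] by simp
  have tail_X: "(\<lambda>i. X ^ (i + k) /\<^sub>R fact (i + k)) sums (exp X - (\<Sum>m<k. X ^ m /\<^sub>R fact m))"
    using sums_iff_shift[of "\<lambda>m. X ^ m /\<^sub>R fact m" k] exp_converges[of X] by simp
  have le: "norm (v ^ (i + k) /\<^sub>R fact (i + k)) \<le> X ^ (i + k) /\<^sub>R fact (i + k)" for i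
    using assms by (simp add: norm_power divide_right_mono power_mono)
  have summable: "summable (\<lambda>i. norm (v ^ (i + k) /\<^sub>R fact (i + k)))"
    by (rule summable_comparison_test[OF _ sums_summable[OF tail_X]]) (use le in auto)
  have "cmod (exp v - (\<Sum>m<k. v ^ m /\<^sub>R fact m)) = norm (\<Sum>i. v ^ (i + k) /\<^sub>R fact (i + k))"
    using tail_v by (simp add: sums_iff)
  also have "\<dots> \<le> (\<Sum>i. norm (v ^ (i + k) /\<^sub>R fact (i + k)))" by (rule summable_norm[OF summable])
  also have "\<dots> \<le> (\<Sum>i. X ^ (i + k) /\<^sub>R fact (i + k))"
    by (rule suminf_le[OF le summable sums_summable[OF tail_X]])
  also have "\<dots> = exp X - (\<Sum>m<k. X ^ m /\<^sub>R fact m)" using tail_X by (simp add: sums_iff)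
  finally show ?thesis .
qed

lemma exp_minus_partial_sum_tendsto_zero:
  "((\<lambda>k. exp (X::real) - (\<Sum>m<k. X ^ m /\<^sub>R fact m)) \<longlongrightarrow> 0) sequentially"
  using tendsto_diff[OF tendsto_const[of "exp X"] exp_converges[of X, unfolded sums_def]] by simp

lemma norm_partial_exp_on_strip_le:
  assumes "Im z \<le> \<epsilon>" "cmod z \<le> R"
  shows "cmod (\<Sum>m<k. (- \<i> * of_nat n * z) ^ m /\<^sub>R fact m) \<le>
    exp (real n * \<epsilon>) + (exp (real n * R) - (\<Sum>m<k. (real n * R) ^ m /\<^sub>R fact m))"
proof -
  let ?w = "- \<i> * of_nat n * z"
  have "cmod ?w \<le> real n * R" using assms by (simp add: norm_mult mult_left_mono)
  then have tail: "cmod (exp ?w - (\<Sum>m<k. ?w ^ m /\<^sub>R fact m)) \<le>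
      exp (real n * R) - (\<Sum>m<k. (real n * R) ^ m /\<^sub>R fact m)"
    by (rule norm_exp_minus_partial_sum_le)
  have "cmod (exp ?w) = exp (real n * Im z)" by (simp add: norm_exp_eq_Re)
  also have "\<dots> \<le> exp (real n * \<epsilon>)" using assms by (simp add: mult_left_mono)
  finally have "cmod (exp ?w) \<le> exp (real n * \<epsilon>)" .
  moreover have "cmod (\<Sum>m<k. ?w ^ m /\<^sub>R fact m) \<le> cmod (exp ?w) + cmod (exp ?w - (\<Sum>m<k. ?w ^ m /\<^sub>R fact m))"
    using norm_triangle_sub[of "\<Sum>m<k. ?w ^ m /\<^sub>R fact m" "exp ?w"] by (simp only: norm_minus_commute)
  ultimately show ?thesis using tail by linarith
qed

lemma cont_seminorm_strip_bound:
  assumes "cont_seminorm p" "\<epsilon> > 0"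
  obtains R C where "R > 0" "\<And>F B. F holomorphic_on {z. \<bar>Im z\<bar> < \<epsilon>} \<Longrightarrow> 0 \<le> B \<Longrightarrow>
    (\<And>z. \<bar>Im z\<bar> < \<epsilon> \<Longrightarrow> cmod z \<le> R \<Longrightarrow> cmod (F z) \<le> B) \<Longrightarrow> p (\<lambda>x. F (of_real x)) \<le> C * B"
proof -
  define U where "U = {z. \<bar>Im z\<bar> < \<epsilon>}"
  have "open U" unfolding U_def by (intro open_Collect_less continuous_intros)
  moreover have "range complex_of_real \<subseteq> U" unfolding U_def using \<open>\<epsilon> > 0\<close> by auto
  moreover have "\<forall>U. open U \<and> range complex_of_real \<subseteq> U \<longrightarrow> (\<exists>L C. compact L \<and> L \<subseteq> U \<and>
      (\<forall>F B. F holomorphic_on U \<and> 0 \<le> B \<and> (\<forall>z\<in>L. cmod (F z) \<le> B) \<longrightarrow>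
        p (\<lambda>x. F (complex_of_real x)) \<le> C * B))"
    using assms(1) unfolding cont_seminorm_def by blast
  ultimately obtain L C where L: "compact L" "L \<subseteq> U" and bound: "\<And>F B. F holomorphic_on U \<Longrightarrow>
      0 \<le> B \<Longrightarrow> (\<forall>z\<in>L. cmod (F z) \<le> B) \<Longrightarrow> p (\<lambda>x. F (complex_of_real x)) \<le> C * B"
    by meson
  obtain R where R: "\<forall>z\<in>L. cmod z \<le> R" "R > 0"
    using compact_imp_bounded[OF L(1)] by (auto simp: bounded_pos)
  show thesis
  proof (rule that[OF R(2)])
    fix F B assume hol: "F holomorphic_on {z. \<bar>Im z\<bar> < \<epsilon>}" and "0 \<le> B"
      and F_le: "\<And>z. \<bar>Im z\<bar> < \<epsilon> \<Longrightarrow> cmod z \<le> R \<Longrightarrow> cmod (F z) \<le> B"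
    have "\<forall>z\<in>L. cmod (F z) \<le> B"
      using L(2) R(1) F_le unfolding U_def by blast
    with hol[folded U_def] \<open>0 \<le> B\<close> show "p (\<lambda>x. F (of_real x)) \<le> C * B"
      by (rule bound)
  qed
qed

(* G n is the value at y of T applied to x \<mapsto> exp (-i n x), a function of size exp (n \<epsilon>) on the
   strip |Im z| < \<epsilon>. *)

lemma cont_linear_op_exp_strip_bound:
  assumes T: "cont_linear_op T" and eigen: "\<And>m. T (monomial m) = (\<lambda>x. \<mu> m * monomial m x)"
    and conv: "\<And>n::nat. ((\<lambda>k. \<Sum>m<k. ((- \<i> * of_nat n) ^ m /\<^sub>R fact m) * \<mu> m * of_real y ^ m)
      \<longlongrightarrow> G n) sequentially"
    and "\<epsilon> > 0"
  obtains C where "\<And>n. cmod (G n) \<le> C * exp (real n * \<epsilon>)"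
proof (rule cont_seminorm_strip_bound[OF cont_seminorm_comp[OF T cont_seminorm_eval[of y]] \<open>\<epsilon> > 0\<close>])
  fix R C assume "R > 0" and bound: "\<And>F B. F holomorphic_on {z. \<bar>Im z\<bar> < \<epsilon>} \<Longrightarrow> 0 \<le> B \<Longrightarrow>
    (\<And>z. \<bar>Im z\<bar> < \<epsilon> \<Longrightarrow> cmod z \<le> R \<Longrightarrow> cmod (F z) \<le> B) \<Longrightarrow> cmod (T (\<lambda>x. F (of_real x)) y) \<le> C * B"
  have "cmod (G n) \<le> C * exp (real n * \<epsilon>)" for n
  proof -
    define B where "B k = exp (real n * \<epsilon>) + (exp (real n * R) - (\<Sum>m<k. (real n * R) ^ m /\<^sub>R fact m))"
      for k
    have partial: "cmod (\<Sum>m<k. ((- \<i> * of_nat n) ^ m /\<^sub>R fact m) * \<mu> m * of_real y ^ m) \<le> C * B k"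
      for k
    proof -
      define F where "F z = (\<Sum>m<k. (- \<i> * of_nat n * z) ^ m /\<^sub>R fact m)" for z
      have "cmod (0::complex) \<le> real n * R" using \<open>R > 0\<close> by simp
      from order_trans[OF norm_ge_zero norm_exp_minus_partial_sum_le[OF this, of k]]
      have B_nonneg: "0 \<le> B k" by (simp add: B_def add_nonneg_nonneg)
      have F_le: "cmod (F z) \<le> B k" if "\<bar>Im z\<bar> < \<epsilon>" "cmod z \<le> R" for z
        unfolding F_def B_def using that by (intro norm_partial_exp_on_strip_le) auto
      have "F holomorphic_on {z. \<bar>Im z\<bar> < \<epsilon>}" unfolding F_def by (intro holomorphic_intros)
      then have "cmod (T (\<lambda>x. F (of_real x)) y) \<le> C * B k" using B_nonneg F_le by (rule bound)
      moreover have F_eq: "(\<lambda>x. F (complex_of_real x)) =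
          (\<lambda>x. \<Sum>m<k. ((- \<i> * of_nat n) ^ m /\<^sub>R fact m) * monomial m x)"
        unfolding F_def monomial_def power_mult_distrib by (simp add: scaleR_conv_of_real mult_ac)
      have sum_eq: "T (\<lambda>x. \<Sum>m<k. w m * monomial m x) = (\<lambda>x. \<Sum>m<k. w m * T (monomial m) x)" for w
        by (rule cont_linear_op_sum[OF T]) (auto simp: real_analytic_monomial)
      have "T (\<lambda>x. F (complex_of_real x)) y =
          (\<Sum>m<k. ((- \<i> * of_nat n) ^ m /\<^sub>R fact m) * \<mu> m * of_real y ^ m)"
        unfolding F_eq sum_eq eigen by (simp add: monomial_def mult.assoc)
      ultimately show ?thesis by simp
    qed
    have "((\<lambda>k. C * B k) \<longlongrightarrow> C * (exp (real n * \<epsilon>) + 0)) sequentially"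
      unfolding B_def by (intro tendsto_intros exp_minus_partial_sum_tendsto_zero)
    from tendsto_le[OF _ this tendsto_norm[OF conv[of n]]] partial show ?thesis by simp
  qed
  then show thesis by (rule that)
qed

lemma exp_sum_power_series_tendsto:
  fixes b d :: "nat \<Rightarrow> complex"
  assumes "\<And>m. \<mu> m = A * (\<Sum>j<N. b j * d j ^ m)"
  shows "((\<lambda>k. \<Sum>m<k. (w ^ m /\<^sub>R fact m) * \<mu> m * v ^ m) \<longlongrightarrow> A * (\<Sum>j<N. b j * exp (w * d j * v)))
    sequentially"
proof -
  have partial: "(\<Sum>m<k. (w ^ m /\<^sub>R fact m) * \<mu> m * v ^ m) =
      A * (\<Sum>j<N. b j * (\<Sum>m<k. (w * d j * v) ^ m /\<^sub>R fact m))" for k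
  proof -
    have "(\<Sum>m<k. (w ^ m /\<^sub>R fact m) * \<mu> m * v ^ m) =
        (\<Sum>m<k. \<Sum>j<N. A * (b j * ((w * d j * v) ^ m /\<^sub>R fact m)))"
      unfolding assms
      by (intro sum.cong refl)
        (simp add: sum_distrib_left sum_distrib_right power_mult_distrib scaleR_conv_of_real mult_ac)
    also have "\<dots> = A * (\<Sum>j<N. b j * (\<Sum>m<k. (w * d j * v) ^ m /\<^sub>R fact m))"
      by (subst sum.swap) (simp add: sum_distrib_left)
    finally show ?thesis .
  qed
  show ?thesis unfolding partial
    by (intro tendsto_intros exp_converges[unfolded sums_def])
qed

lemma exp_nat_mult_neg_tendsto_zero:
  assumes "a > 0"
  shows "((\<lambda>n. exp (- (real n * a))) \<longlongrightarrow> 0) sequentially"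
proof -
  have "((\<lambda>n. exp (- a) ^ n) \<longlongrightarrow> 0) sequentially"
    using assms by (intro LIMSEQ_power_zero) auto
  then show ?thesis by (simp add: exp_of_nat_mult[symmetric])
qed

lemma norm_exp_sum_lower_bound:
  fixes b z :: "nat \<Rightarrow> complex"
  assumes "finite J" "i \<in> J" "\<And>j. j \<in> J \<Longrightarrow> j \<noteq> i \<Longrightarrow> Re (z j) \<le> M"
  shows "cmod (b i) * exp (real n * Re (z i)) - (\<Sum>j\<in>J. cmod (b j)) * exp (real n * M)
    \<le> cmod (\<Sum>j\<in>J. b j * exp (of_nat n * z j))"
proof -
  have norm_exp: "cmod (exp (of_nat n * z j)) = exp (real n * Re (z j))" for j
    by (simp add: norm_exp_eq_Re)
  have "cmod (\<Sum>j\<in>J - {i}. b j * exp (of_nat n * z j)) \<le> (\<Sum>j\<in>J - {i}. cmod (b j) * exp (real n * M))"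
  proof (rule order_trans[OF norm_sum sum_mono])
    fix j assume "j \<in> J - {i}"
    then have "exp (real n * Re (z j)) \<le> exp (real n * M)" using assms(3) by (simp add: mult_left_mono)
    then show "cmod (b j * exp (of_nat n * z j)) \<le> cmod (b j) * exp (real n * M)"
      unfolding norm_mult norm_exp by (rule mult_left_mono) simp
  qed
  also have "\<dots> \<le> (\<Sum>j\<in>J. cmod (b j)) * exp (real n * M)"
    unfolding sum_distrib_right[symmetric] using assms(1) by (intro mult_right_mono sum_mono2) auto
  finally have rest: "cmod (\<Sum>j\<in>J - {i}. b j * exp (of_nat n * z j)) \<le> (\<Sum>j\<in>J. cmod (b j)) * exp (real n * M)" .
  have "(\<Sum>j\<in>J. b j * exp (of_nat n * z j)) = b i * exp (of_nat n * z i) + (\<Sum>j\<in>J - {i}. b j * exp (of_nat n * z j))"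
    using assms(1,2) by (simp add: sum.remove)
  then have "cmod (b i) * exp (real n * Re (z i)) \<le>
      cmod (\<Sum>j\<in>J. b j * exp (of_nat n * z j)) + cmod (\<Sum>j\<in>J - {i}. b j * exp (of_nat n * z j))"
    using norm_triangle_sub[of "b i * exp (of_nat n * z i)" "\<Sum>j\<in>J. b j * exp (of_nat n * z j)"]
    by (simp add: norm_mult norm_exp)
  with rest show ?thesis by linarith
qed

lemma exp_sum_subexponential_imp_Re_nonpos:
  fixes b z :: "nat \<Rightarrow> complex"
  assumes J: "finite J" and b: "\<And>j. j \<in> J \<Longrightarrow> b j \<noteq> 0" and inj: "inj_on (\<lambda>j. Re (z j)) J"
    and bound: "\<And>\<epsilon>. \<epsilon> > 0 \<Longrightarrow>
      \<exists>C. \<forall>n. cmod (\<Sum>j\<in>J. b j * exp (of_nat n * z j)) \<le> C * exp (real n * \<epsilon>)"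
    and "j \<in> J"
  shows "Re (z j) \<le> 0"
proof (rule ccontr)
  assume "\<not> Re (z j) \<le> 0"
  have "Max ((\<lambda>j. Re (z j)) ` J) \<in> (\<lambda>j. Re (z j)) ` J" using J \<open>j \<in> J\<close> by (intro Max_in) auto
  then obtain i where i: "i \<in> J" "Re (z i) = Max ((\<lambda>j. Re (z j)) ` J)" by auto
  have le_max: "Re (z k) \<le> Re (z i)" if "k \<in> J" for k using i J that by auto
  define M where "M = Re (z i)"
  have "M > 0" using le_max[OF \<open>j \<in> J\<close>] \<open>\<not> Re (z j) \<le> 0\<close> by (simp add: M_def)
  define M' where "M' = Max (insert (M / 2) ((\<lambda>j. Re (z j)) ` (J - {i})))"
  have others: "Re (z k) \<le> M'" if "k \<in> J" "k \<noteq> i" for k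
    unfolding M'_def using J that by (intro Max_ge) auto
  have "Re (z k) < M" if "k \<in> J - {i}" for k
    using le_max[of k] inj i(1) that unfolding M_def inj_on_def by force
  then have "M' < M" unfolding M'_def using J \<open>M > 0\<close> by auto
  obtain C where C: "\<And>n. cmod (\<Sum>j\<in>J. b j * exp (of_nat n * z j)) \<le> C * exp (real n * (M / 2))"
    using bound[of "M / 2"] \<open>M > 0\<close> by auto
  define S where "S = (\<Sum>j\<in>J. cmod (b j))"
  have "cmod (b i) \<le> S * exp (- (real n * (M - M'))) + C * exp (- (real n * (M / 2)))" for n
  proof -
    have "cmod (b i) * exp (real n * M) \<le> S * exp (real n * M') + C * exp (real n * (M / 2))"
      using norm_exp_sum_lower_bound[where z = z and M = M' and b = b and n = n, OF J i(1) others] C[of n]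
      unfolding M_def S_def by linarith
    then have "cmod (b i) * exp (real n * M) * exp (- (real n * M)) \<le>
        (S * exp (real n * M') + C * exp (real n * (M / 2))) * exp (- (real n * M))"
      by (intro mult_right_mono) auto
    then show ?thesis by (simp add: algebra_simps exp_add[symmetric] exp_minus_inverse)
  qed
  moreover have "((\<lambda>n. S * exp (- (real n * (M - M'))) + C * exp (- (real n * (M / 2)))) \<longlongrightarrow> S * 0 + C * 0)
      sequentially"
    using \<open>M' < M\<close> \<open>M > 0\<close> by (intro tendsto_intros exp_nat_mult_neg_tendsto_zero) auto
  then have "\<forall>\<^sub>F n in sequentially. S * exp (- (real n * (M - M'))) + C * exp (- (real n * (M / 2))) < cmod (b i)"
    using b[OF i(1)] by (intro order_tendstoD) auto
  ultimately show False by (auto simp: eventually_sequentially not_less[symmetric])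
qed

lemma cont_linear_op_eigenvalues_not_exp_sum:
  fixes b d :: "nat \<Rightarrow> complex"
  assumes T: "cont_linear_op T"
    and eigen: "\<And>m. T (monomial m) = (\<lambda>x. A * (\<Sum>j<N. b j * d j ^ m) * monomial m x)"
    and "A \<noteq> 0" and two: "i < N" "j < N" "i \<noteq> j" "b i \<noteq> 0" "b j \<noteq> 0"
    and Im_distinct: "\<And>i j. i < N \<Longrightarrow> j < N \<Longrightarrow> i \<noteq> j \<Longrightarrow> Im (d i) \<noteq> Im (d j)"
  shows False
proof -
  define J where "J = {j. j < N \<and> b j \<noteq> 0}"
  have J: "finite J" "i \<in> J" "j \<in> J" using two by (auto simp: J_def)
  have sum_J: "(\<Sum>j<N. b j * f j) = (\<Sum>j\<in>J. b j * f j)" for f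
    unfolding J_def by (intro sum.mono_neutral_right) auto
  have Im_bound: "y * Im (d k) \<le> 0" if "k \<in> J" "y \<in> {1, -1}" for k y
  proof -
    define z where "z k = - \<i> * of_real y * d k" for k
    have "Re (z k) \<le> 0"
    proof (rule exp_sum_subexponential_imp_Re_nonpos[OF J(1) _ _ _ \<open>k \<in> J\<close>, of b])
      show "inj_on (\<lambda>j. Re (z j)) J"
        using Im_distinct \<open>y \<in> {1, -1}\<close> by (auto simp: inj_on_def z_def J_def)
      fix \<epsilon> :: real assume "\<epsilon> > 0"
      obtain C where C: "\<And>n. cmod (A * (\<Sum>j<N. b j * exp ((- \<i> * of_nat n) * d j * of_real y)))
          \<le> C * exp (real n * \<epsilon>)"
        using cont_linear_op_exp_strip_bound[OF T eigen exp_sum_power_series_tendsto[where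
            \<mu> = "\<lambda>m. A * (\<Sum>j<N. b j * d j ^ m)" and v = "of_real y", OF refl] \<open>\<epsilon> > 0\<close>]
        by blast
      have "cmod (\<Sum>j\<in>J. b j * exp (of_nat n * z j)) \<le> C / cmod A * exp (real n * \<epsilon>)" for n
        using C[of n] \<open>A \<noteq> 0\<close> by (simp add: sum_J z_def norm_mult field_simps mult_ac)
      then show "\<exists>C. \<forall>n. cmod (\<Sum>j\<in>J. b j * exp (of_nat n * z j)) \<le> C * exp (real n * \<epsilon>)" by blast
    qed (auto simp: J_def)
    then show ?thesis by (simp add: z_def)
  qed
  have "Im (d i) = 0" "Im (d j) = 0"
    using Im_bound[OF J(2), of 1] Im_bound[OF J(2), of "-1"] Im_bound[OF J(3), of 1] Im_bound[OF J(3), of "-1"]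
    by auto
  with Im_distinct[OF two(1-3)] show False by simp
qed

section \<open>Imaginary rational coefficients\<close>

lemma rat_common_denominator:
  fixes q :: "'a \<Rightarrow> rat"
  assumes "finite S"
  shows "\<exists>D::int. D > 0 \<and> (\<forall>k\<in>S. of_int D * q k \<in> \<int>)"
  using assms
proof (induction S rule: finite_induct)
  case empty
  show ?case by (intro exI[of _ 1]) auto
next
  case (insert x S)
  then obtain D where D: "D > 0" "\<forall>k\<in>S. of_int D * q k \<in> \<int>" by blast
  obtain n d where nd: "quotient_of (q x) = (n, d)" by (cases "quotient_of (q x)")
  have "d > 0" by (rule quotient_of_denom_pos[OF nd])
  have "of_int (D * d) * q x = of_int (D * n)"
    using \<open>d > 0\<close> by (simp add: quotient_of_div[OF nd])
  then have "of_int (D * d) * q x \<in> \<int>" by (metis Ints_of_int)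
  moreover have "of_int (D * d) * q k \<in> \<int>" if "k \<in> S" for k
    using D(2) that by (metis Ints_mult Ints_of_int mult.assoc mult.commute of_int_mult)
  ultimately have "\<forall>k\<in>insert x S. of_int (D * d) * q k \<in> \<int>" by blast
  with D(1) \<open>d > 0\<close> show ?case by (blast intro: mult_pos_pos)
qed

lemma multiple_avoiding_odd_integers:
  fixes D :: int and \<alpha> :: real
  assumes "D > 0"
  shows "\<exists>D'. D' > 0 \<and> D dvd D' \<and> (\<forall>z::int. 4 * of_int D' * \<alpha> \<noteq> of_int (2 * z + 1))"
proof (cases "\<exists>z::int. 4 * of_int D * \<alpha> = of_int (2 * z + 1)")
  case False
  then show ?thesis using assms by (intro exI[of _ D]) auto
next
  case True
  then obtain z where z: "4 * of_int D * \<alpha> = of_int (2 * z + 1)" by blast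
  have "4 * of_int (2 * D) * \<alpha> \<noteq> of_int (2 * z' + 1)" for z' :: int
  proof
    assume "4 * of_int (2 * D) * \<alpha> = of_int (2 * z' + 1)"
    then have "of_int (2 * (2 * z + 1)) = (of_int (2 * z' + 1) :: real)" using z by (simp add: algebra_simps)
    then have "2 * (2 * z + 1) = 2 * z' + 1" by (simp only: of_int_eq_iff)
    then show False by presburger
  qed
  then show ?thesis using assms by (intro exI[of _ "2 * D"]) auto
qed

lemma int_poly_mod_periodic:
  assumes "N > 0"
  shows "int N dvd (\<Sum>k\<in>S. r k * int m ^ k) - (\<Sum>k\<in>S. r k * int (m mod N) ^ k)"
proof -
  have "int N dvd int m ^ k - int (m mod N) ^ k" for k
    by (metis mod_eq_dvd_iff power_mod zmod_int)
  then have "int N dvd (\<Sum>k\<in>S. r k * (int m ^ k - int (m mod N) ^ k))"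
    by (intro dvd_sum dvd_mult) auto
  then show ?thesis by (simp add: sum_subtractf right_diff_distrib)
qed

lemma int_poly_not_additive:
  fixes r :: "nat \<Rightarrow> int"
  assumes "K \<ge> 2" "r K \<noteq> 0"
  defines "R \<equiv> \<lambda>m::nat. \<Sum>k\<in>{2..K}. r k * int m ^ k"
  shows "\<exists>m. R (Suc m) - R m - R 1 \<noteq> 0"
proof (rule ccontr)
  assume "\<nexists>m. R (Suc m) - R m - R 1 \<noteq> 0"
  then have additive: "R (Suc m) - R m - R 1 = 0" for m by blast
  have step: "R (Suc m) = R m + R 1" for m using additive[of m] by linarith
  have linear: "R m = int m * R 1" for m
  proof (induction m)
    case 0
    show ?case unfolding R_def by (simp add: sum.neutral)
  next
    case (Suc m)
    with step[of m] show ?case by (simp add: algebra_simps)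
  qed
  define p where "p = (\<Sum>k\<in>{2..K}. monom (r k) k) - [:0, R 1:]"
  have "poly p (int m) = 0" for m
    unfolding p_def using linear[of m] by (simp add: poly_sum poly_monom R_def mult_ac)
  then have "range int \<subseteq> {x. poly p x = 0}" by auto
  moreover have "infinite (range int)" by (auto dest: finite_imageD simp: inj_on_def)
  ultimately have "infinite {x. poly p x = 0}" by (rule infinite_super)
  then have "p = 0" using poly_roots_finite by blast
  moreover have "coeff p K = r K"
  proof -
    obtain K' where "K = Suc (Suc K')" using assms(1) by (metis add_2_eq_Suc le_Suc_ex)
    then have "coeff [:0, R 1:] K = 0" by simp
    then show ?thesis unfolding p_def using assms(1) by (simp add: coeff_sum)
  qed
  ultimately show False using assms(2) by simp
qed

lemma complex_Im_eq_norm_eq_cases: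
  fixes u v :: complex
  assumes "Im u = Im v" "cmod u = cmod v"
  shows "u = v \<or> u = - cnj v"
proof -
  have "Re u ^ 2 + Im u ^ 2 = Re v ^ 2 + Im v ^ 2"
    using assms(2) by (simp flip: cmod_power2)
  then have "Re u = Re v \<or> Re u = - Re v" using assms(1) by (simp add: power2_eq_iff)
  then show ?thesis using assms(1) by (auto simp: complex_eq_iff)
qed

(* Two points of equal modulus and equal imaginary part coincide or are reflections -cnj of each
   other; for odd N the reflection case forces 4 D Im c to be an odd integer. *)
lemma Im_rotated_unit_roots_distinct:
  fixes c :: complex and D :: int
  assumes N: "N = 2 * h + 1" and t: "t = 2 * pi * of_int D / real N"
    and not_odd: "\<forall>z::int. 4 * of_int D * Im c \<noteq> of_int (2 * z + 1)"
    and ij: "i < N" "j < N" "i \<noteq> j"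
  shows "Im (exp (of_real t * c) * unit_root N (int i)) \<noteq> Im (exp (of_real t * c) * unit_root N (int j))"
proof
  define z where "z k = of_real t * c + 2 * of_real pi * \<i> * of_nat k / of_nat N" for k
  have exp_z: "exp (of_real t * c) * unit_root N (int k) = exp (z k)" for k
    unfolding z_def unit_root_def by (simp add: exp_add)
  assume "Im (exp (of_real t * c) * unit_root N (int i)) = Im (exp (of_real t * c) * unit_root N (int j))"
  moreover have "cmod (exp (z i)) = cmod (exp (z j))" by (simp add: norm_exp_eq_Re z_def)
  ultimately have cases: "exp (z i) = exp (z j) \<or> exp (z i) = - cnj (exp (z j))"
    unfolding exp_z by (rule complex_Im_eq_norm_eq_cases)
  have "N > 0" using N by simp
  from cases show False
  proof
    assume "exp (z i) = exp (z j)"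
    then have "unit_root N (int i) = unit_root N (int j)" by (simp flip: exp_z)
    with \<open>N > 0\<close> have "int N dvd int i - int j" by (simp add: unit_root_eq_iff)
    then show False using ij dvd_imp_le_int[of "int i - int j" "int N"] by linarith
  next
    assume "exp (z i) = - cnj (exp (z j))"
    also have "\<dots> = exp (cnj (z j) + of_real pi * \<i>)" by (simp add: exp_add exp_cnj)
    finally obtain n :: int where "z i = cnj (z j) + of_real pi * \<i> + of_real (of_int (2 * n) * pi) * \<i>"
      unfolding exp_eq by blast
    then have "Im (z i) = Im (cnj (z j) + of_real pi * \<i> + of_real (of_int (2 * n) * pi) * \<i>)" by simp
    then have "t * Im c + 2 * pi * real i / real N = - (t * Im c + 2 * pi * real j / real N) + pi + 2 * of_int n * pi"
      by (simp add: z_def)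
    then have "pi * (4 * of_int D * Im c) = pi * (real N * (2 * of_int n + 1) - 2 * real i - 2 * real j)"
      using \<open>N > 0\<close> unfolding t by (simp add: field_simps)
    then have "4 * of_int D * Im c = real N * (2 * of_int n + 1) - 2 * real i - 2 * real j" by simp
    also have "\<dots> = of_int (2 * (2 * int h * n + int h + n - int i - int j) + 1)"
      unfolding N by (simp add: algebra_simps)
    finally show False using not_odd by blast
  qed
qed

lemma imaginary_rational_coefficients_scaling:
  assumes "a K \<noteq> 0" and rat: "\<forall>k. 2 \<le> k \<and> k \<le> K \<longrightarrow> (\<exists>q::rat. a k = \<i> * of_rat q)"
    and "K \<ge> 2"
  obtains D :: int and r :: "nat \<Rightarrow> int"
  where "D > 0" "r K \<noteq> 0" "\<And>k. k \<in> {2..K} \<Longrightarrow> of_int D * a k = \<i> * of_int (r k)"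
    "\<forall>z::int. 4 * of_int D * Im (a 1) \<noteq> of_int (2 * z + 1)"
proof -
  obtain q where q: "\<And>k. k \<in> {2..K} \<Longrightarrow> a k = \<i> * of_rat (q k)"
    using rat by (metis atLeastAtMost_iff)
  obtain D0 where "D0 > 0" and D0: "\<forall>k\<in>{2..K}. of_int D0 * q k \<in> \<int>"
    using rat_common_denominator[of "{2..K}" q] by auto
  obtain D where D: "D > 0" "D0 dvd D" "\<forall>z::int. 4 * of_int D * Im (a 1) \<noteq> of_int (2 * z + 1)"
    using multiple_avoiding_odd_integers[OF \<open>D0 > 0\<close>] by blast
  have "\<forall>k\<in>{2..K}. \<exists>z::int. of_int D * q k = of_int z"
  proof
    fix k assume "k \<in> {2..K}"
    obtain e where "D = D0 * e" using D(2) by (rule dvdE)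
    then have eq: "of_int D * q k = of_int e * (of_int D0 * q k)" by simp
    have "of_int D0 * q k \<in> \<int>" using D0 \<open>k \<in> {2..K}\<close> by blast
    then have "of_int D * q k \<in> \<int>" unfolding eq by (rule Ints_mult[OF Ints_of_int])
    then show "\<exists>z::int. of_int D * q k = of_int z" by (auto elim: Ints_cases)
  qed
  then have "\<exists>r. \<forall>k\<in>{2..K}. of_int D * q k = of_int (r k)" by (rule bchoice)
  then obtain r where r: "\<And>k. k \<in> {2..K} \<Longrightarrow> of_int D * q k = of_int (r k)" by blast
  have scaled: "of_int D * a k = \<i> * of_int (r k)" if "k \<in> {2..K}" for k
  proof -
    have "of_int D * a k = \<i> * of_rat (of_int D * q k)" by (simp add: q[OF that] of_rat_mult)
    then show ?thesis by (simp add: r[OF that])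
  qed
  have "r K \<noteq> 0" using scaled[of K] \<open>a K \<noteq> 0\<close> \<open>D > 0\<close> \<open>K \<ge> 2\<close> by auto
  from D(1) this scaled D(3) show thesis by (rule that)
qed

lemma exp_euler_symbol_unit_root:
  assumes "K \<ge> 2" and scaled: "\<And>k. k \<in> {2..K} \<Longrightarrow> of_int D * a k = \<i> * of_int (r k)"
    and t: "t = 2 * pi * of_int D / real N"
  shows "exp (of_real t * euler_symbol a K m) =
    exp (of_real t * a 0) * exp (of_real t * a 1) ^ m * unit_root N (\<Sum>k\<in>{2..K}. r k * int m ^ k)"
proof -
  have "of_real t * (a k * of_nat m ^ k) = 2 * of_real pi * \<i> * of_int (r k * int m ^ k) / of_nat N"
    if "k \<in> {2..K}" for k
    using scaled[OF that] unfolding t by (simp add: field_simps)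
  then have "of_real t * (\<Sum>k\<in>{2..K}. a k * of_nat m ^ k) =
      2 * of_real pi * \<i> * of_int (\<Sum>k\<in>{2..K}. r k * int m ^ k) / of_nat N"
    by (simp add: sum_distrib_left sum_divide_distrib)
  moreover have "{..K} = insert 0 (insert 1 {2..K})" using assms(1) by auto
  then have "euler_symbol a K m = a 0 + a 1 * of_nat m + (\<Sum>k\<in>{2..K}. a k * of_nat m ^ k)"
    by (simp add: euler_symbol_def)
  ultimately show ?thesis
    by (simp add: unit_root_def distrib_left exp_add exp_of_nat_mult[symmetric] mult_ac)
qed

(* With t = 2\<pi>D/N the terms of t P(m) of degree \<ge> 2 lie in 2\<pi>i Z/N. N is odd and chosen not to
   divide R(m0+1) - R(m0) - R(1), so the periodic factor is not a single character. *)
lemma exp_euler_symbol_as_exp_sum: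
  assumes "K \<ge> 2" "a K \<noteq> 0" "\<forall>k. 2 \<le> k \<and> k \<le> K \<longrightarrow> (\<exists>q::rat. a k = \<i> * of_rat q)"
  obtains t A b d and N :: nat and i j
  where "t > 0" "A \<noteq> 0" "\<And>m. exp (of_real t * euler_symbol a K m) = A * (\<Sum>j<N. b j * d j ^ m)"
    "i < N" "j < N" "i \<noteq> j" "b i \<noteq> 0" "b j \<noteq> 0"
    "\<And>i j. i < N \<Longrightarrow> j < N \<Longrightarrow> i \<noteq> j \<Longrightarrow> Im (d i) \<noteq> Im (d j)"
proof -
  obtain D r where "D > 0" "r K \<noteq> 0" and scaled: "\<And>k. k \<in> {2..K} \<Longrightarrow> of_int D * a k = \<i> * of_int (r k)"
    and not_odd: "\<forall>z::int. 4 * of_int D * Im (a 1) \<noteq> of_int (2 * z + 1)"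
    using imaginary_rational_coefficients_scaling assms by metis
  define R where "R m = (\<Sum>k\<in>{2..K}. r k * int m ^ k)" for m
  obtain m0 where "R (Suc m0) - R m0 - R 1 \<noteq> 0"
    using int_poly_not_additive[where r = r, OF assms(1) \<open>r K \<noteq> 0\<close>] unfolding R_def by blast
  define h where "h = nat \<bar>R (Suc m0) - R m0 - R 1\<bar>"
  define N where "N = 2 * h + 1"
  have "N > 0" by (simp add: N_def)
  have not_dvd: "\<not> int N dvd R (Suc m0) - R m0 - R 1"
    using dvd_imp_le_int[OF \<open>R (Suc m0) - R m0 - R 1 \<noteq> 0\<close>, of "int N"] by (auto simp: N_def h_def)
  define t where "t = 2 * pi * of_int D / real N"
  define c where "c m = unit_root N (R m)" for m
  have periodic: "c m = c (m mod N)" for m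
    unfolding c_def R_def using unit_root_eq_iff[OF \<open>N > 0\<close>] int_poly_mod_periodic[OF \<open>N > 0\<close>] by blast
  define b where "b = dft N c"
  define d where "d j = exp (of_real t * a 1) * unit_root N (int j)" for j
  have exp_sum: "exp (of_real t * euler_symbol a K m) = exp (of_real t * a 0) * (\<Sum>j<N. b j * d j ^ m)" for m
  proof -
    have "exp (of_real t * euler_symbol a K m) = exp (of_real t * a 0) * (exp (of_real t * a 1) ^ m * c m)"
      unfolding c_def R_def mult.assoc[symmetric] by (rule exp_euler_symbol_unit_root[OF assms(1) scaled t_def])
    also have "exp (of_real t * a 1) ^ m * c m = (\<Sum>j<N. b j * d j ^ m)"
      unfolding b_def d_def by (rule geometric_times_periodic_as_exp_sum[where c = c, OF \<open>N > 0\<close> periodic])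
    finally show ?thesis .
  qed
  have "\<exists>i j. i < N \<and> j < N \<and> i \<noteq> j \<and> b i \<noteq> 0 \<and> b j \<noteq> 0"
  proof (rule ccontr)
    assume "\<not> ?thesis"
    then have "c (Suc m0) * c 0 = c 1 * c m0"
      unfolding b_def by (intro dft_single_coefficient_multiplicative[where c = c, OF \<open>N > 0\<close> periodic]) blast
    then have "unit_root N (R (Suc m0) + R 0) = unit_root N (R 1 + R m0)"
      by (simp add: c_def unit_root_add)
    moreover have "R 0 = 0" unfolding R_def by (rule sum.neutral) auto
    ultimately show False
      using not_dvd unit_root_eq_iff[OF \<open>N > 0\<close>] by (simp add: algebra_simps)
  qed
  then obtain i j where two: "i < N" "j < N" "i \<noteq> j" "b i \<noteq> 0" "b j \<noteq> 0" by blast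
  have Im_distinct: "Im (d i) \<noteq> Im (d j)" if "i < N" "j < N" "i \<noteq> j" for i j
    unfolding d_def using Im_rotated_unit_roots_distinct[OF N_def t_def not_odd that] .
  have "t > 0" using \<open>D > 0\<close> by (simp add: t_def N_def)
  show thesis by (rule that[OF \<open>t > 0\<close> _ exp_sum two Im_distinct]) simp
qed

lemma not_generates_if_imaginary_rational:
  assumes "K \<ge> 2" "a K \<noteq> 0" "\<forall>k. 2 \<le> k \<and> k \<le> K \<longrightarrow> (\<exists>q::rat. a k = \<i> * of_rat q)"
  shows "\<not> generates (poly_euler a K) T"
proof
  assume gen: "generates (poly_euler a K) T"
  show False
  proof (rule exp_euler_symbol_as_exp_sum[OF assms])
    fix t A b d and N :: nat and i j
    assume "t > 0" "A \<noteq> 0"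
      and eigenvalue: "\<And>m. exp (of_real t * euler_symbol a K m) = A * (\<Sum>j<N. b j * d j ^ m)"
      and two: "i < N" "j < N" "i \<noteq> j" "b i \<noteq> 0" "b j \<noteq> 0"
      and Im_distinct: "\<And>i j. i < N \<Longrightarrow> j < N \<Longrightarrow> i \<noteq> j \<Longrightarrow> Im (d i) \<noteq> Im (d j)"
    have eigen: "T t (monomial m) = (\<lambda>x. A * (\<Sum>j<N. b j * d j ^ m) * monomial m x)" for m
      using generates_poly_euler_monomial[OF gen, of t m] \<open>t > 0\<close> by (simp add: eigenvalue)
    show False using generates_cont_linear_op[OF gen less_imp_le[OF \<open>t > 0\<close>]] eigen
        \<open>A \<noteq> 0\<close> two Im_distinct by (rule cont_linear_op_eigenvalues_not_exp_sum)
  qed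
qed

theorem mainTheorem7:
  fixes a :: "nat \<Rightarrow> complex" and K :: nat
  assumes "K \<ge> 2" and "a K \<noteq> 0"
    and "(\<exists>l. 2 \<le> l \<and> l \<le> K \<and> (\<forall>k. l < k \<and> k \<le> K \<longrightarrow> Re (a k) = 0) \<and> Re (a l) > 0)
         \<or> (\<forall>k. 2 \<le> k \<and> k \<le> K \<longrightarrow> (\<exists>q::rat. a k = \<i> * of_rat q))"
  shows "\<not> (\<exists>T. generates (poly_euler a K) T)"
proof
  assume "\<exists>T. generates (poly_euler a K) T"
  then obtain T where gen: "generates (poly_euler a K) T" ..
  from assms(3) show False
  proof
    assume "\<exists>l. 2 \<le> l \<and> l \<le> K \<and> (\<forall>k. l < k \<and> k \<le> K \<longrightarrow> Re (a k) = 0) \<and> Re (a l) > 0"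
    then obtain l where "2 \<le> l" "l \<le> K" "\<forall>k. l < k \<and> k \<le> K \<longrightarrow> Re (a k) = 0" "Re (a l) > 0"
      by blast
    from not_generates_if_real_part_dominant[OF this] gen show False by contradiction
  next
    assume "\<forall>k. 2 \<le> k \<and> k \<le> K \<longrightarrow> (\<exists>q::rat. a k = \<i> * of_rat q)"
    from not_generates_if_imaginary_rational[OF assms(1,2) this] gen show False by contradiction
  qed
qed

end
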